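(* For an order $O$, the following are equivalent: (i) whenever $x\sim y$ in $O$, either ($D(x)\subseteq D(y)$ and $U(x)\subseteq U(y)$) or ($D(y)\subseteq D(x)$ and $U(y)\subseteq U(x)$); (ii) for any two antichains $A,B$ of $O$ such that every element of $A$ is comparable with at least one element of $B$ and every element of $B$ is comparable with at least one element of $A$, either every element of $A$ is less than every element of $B$, or every element of $A$ is greater than every element of $B$; (iii) for any two maximal antichains $A,B$ of $O$, either every element of $A$ is less than every element of $B$, or every element of $A$ is greater than every element of $B$; (iv) for any two antichains $A,B$ of $O$ such that $A$ is a maximal antichain and every element of $A$ is comparable with at least one element of $B$, either every element of $A$ is less than every element of $B$, or every element of $A$ is greater than every element of $B$; (v) $O$ has no induced suborder isomorphic to $O_{obs1}$ and no induced suborder isomorphic to $O_{obs2}$.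
   Context: Orders are partial orders; $x\sim y$ means $x\ne y$ and $x,y$ are incomparable. For an element $x$, $D(x)=\{z: z<x\}$ and $U(x)=\{z:z>x\}$. An antichain is a set of pairwise incomparable elements; it is maximal if no element can be added to it. $O_{obs1}$ is the order on $\{a,b,c,d\}$ whose only comparabilities are $a<b$, $c<d$; $O_{obs2}$ is the order on $\{a,b,c,d\}$ whose only comparabilities are $a<b$, $c<d$, $c<b$. An induced suborder is a subset with the restricted order.
   Formalization: In (ii)-(iv) the conclusion compares only the elements of A not in B with those of B not in A, and in (ii) and (iv) being comparable with an element includes being equal to it. Apart from conventions, each condition added here is assumed in the paper as well or is needed for the statement above to hold. *)

theory Defs
  imports Main
begin

text \<open>An order is a carrier set P of a type with a partial order.\<close>

definition comparable :: "'a::order \<Rightarrow> 'a \<Rightarrow> bool" where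
  "comparable x y \<longleftrightarrow> x \<le> y \<or> y \<le> x"

definition incomp :: "'a::order \<Rightarrow> 'a \<Rightarrow> bool" where
  "incomp x y \<longleftrightarrow> x \<noteq> y \<and> \<not> comparable x y"

definition Dn :: "'a::order set \<Rightarrow> 'a \<Rightarrow> 'a set" where
  "Dn P x = {z \<in> P. z < x}"

definition Up :: "'a::order set \<Rightarrow> 'a \<Rightarrow> 'a set" where
  "Up P x = {z \<in> P. x < z}"

definition antichain_in :: "'a::order set \<Rightarrow> 'a set \<Rightarrow> bool" where
  "antichain_in P A \<longleftrightarrow> A \<subseteq> P \<and> (\<forall>a\<in>A. \<forall>b\<in>A. a \<noteq> b \<longrightarrow> incomp a b)"

definition max_antichain_in :: "'a::order set \<Rightarrow> 'a set \<Rightarrow> bool" where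
  "max_antichain_in P A \<longleftrightarrow> antichain_in P A \<and>
     (\<forall>x\<in>P. x \<notin> A \<longrightarrow> \<not> antichain_in P (insert x A))"

definition all_less :: "'a::order set \<Rightarrow> 'a set \<Rightarrow> bool" where
  "all_less X Y \<longleftrightarrow> (\<forall>x\<in>X. \<forall>y\<in>Y. x < y)"

definition ac_ordered :: "'a::order set \<Rightarrow> 'a set \<Rightarrow> bool" where
  "ac_ordered A B \<longleftrightarrow> all_less (A - B) (B - A) \<or> all_less (B - A) (A - B)"

text \<open>The obstruction orders on {a,b,c,d} = {0,1,2,3}: strict order relations.\<close>
definition obs1_less :: "nat \<Rightarrow> nat \<Rightarrow> bool" where
  "obs1_less i j \<longleftrightarrow> (i, j) \<in> {(0, 1), (2, 3)}"

definition obs2_less :: "nat \<Rightarrow> nat \<Rightarrow> bool" where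
  "obs2_less i j \<longleftrightarrow> (i, j) \<in> {(0, 1), (2, 3), (2, 1)}"

definition has_induced4 :: "'a::order set \<Rightarrow> (nat \<Rightarrow> nat \<Rightarrow> bool) \<Rightarrow> bool" where
  "has_induced4 P R \<longleftrightarrow> (\<exists>f. inj_on f {0..<4} \<and> f ` {0..<4} \<subseteq> P \<and>
       (\<forall>i\<in>{0..<4}. \<forall>j\<in>{0..<4}. f i < f j \<longleftrightarrow> R i j))"

end

theory Submission
  imports Defs
begin

text \<open>
  (i) \<Rightarrow> (ii): if x < y for some x in A - B and y in B - A, this comparability spreads to
  all such pairs. An x' in A - B not below y would be incomparable to it; nested neighbourhoods
  then either put x below x', or transfer the comparability of x' with some element of B - A to y,
  and both violate the antichain property. (ii) \<Rightarrow> (iv) \<Rightarrow> (iii) hold because a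
  maximal antichain meets the comparabilities of every element. (iii) \<Rightarrow> (v): in a copy
  a < b, c < d of either obstruction, maximal antichains through {a, c} and {b, d} are not ordered,
  since neither a < d nor b < a. (v) \<Rightarrow> (i): two incomparable elements with non-nested
  neighbourhoods, together with the witnesses of non-inclusion, span an obstruction.
\<close>

lemma comparable_sym: "comparable a b \<longleftrightarrow> comparable b a"
  by (auto simp: comparable_def)

lemma comparable_iff_less: "a \<noteq> b \<Longrightarrow> comparable a b \<longleftrightarrow> a < b \<or> b < a"
  by (auto simp: comparable_def less_le)

lemma incomp_iff: "incomp a b \<longleftrightarrow> a \<noteq> b \<and> \<not> a < b \<and> \<not> b < a"
  by (auto simp: incomp_def comparable_def less_le)

lemma incomp_sym: "incomp a b \<longleftrightarrow> incomp b a"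
  by (auto simp: incomp_def comparable_def)

lemma antichain_in_iff_pairwise: "antichain_in P A \<longleftrightarrow> A \<subseteq> P \<and> pairwise incomp A"
  by (simp add: antichain_in_def pairwise_def)

lemma antichain_in_subset: "antichain_in P A \<Longrightarrow> A \<subseteq> P"
  by (simp add: antichain_in_def)

lemma max_antichain_in_antichain: "max_antichain_in P A \<Longrightarrow> antichain_in P A"
  by (simp add: max_antichain_in_def)

lemma antichain_comparable_eq:
  "antichain_in P A \<Longrightarrow> a \<in> A \<Longrightarrow> b \<in> A \<Longrightarrow> comparable a b \<Longrightarrow> a = b"
  by (auto simp: antichain_in_def incomp_def)

lemma antichain_not_less: "antichain_in P A \<Longrightarrow> a \<in> A \<Longrightarrow> b \<in> A \<Longrightarrow> \<not> a < b"
  using antichain_comparable_eq by (fastforce simp: comparable_def)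

lemma antichain_in_diff: "antichain_in P A \<Longrightarrow> antichain_in P (A - B)"
  by (auto simp: antichain_in_def)

lemma max_antichain_comparable:
  assumes "max_antichain_in P A" and "b \<in> P"
  shows "\<exists>a\<in>A. comparable a b"
proof (rule ccontr)
  assume "\<not> (\<exists>a\<in>A. comparable a b)"
  then have "b \<notin> A" and "antichain_in P (insert b A)"
    using assms by (auto simp: max_antichain_in_def antichain_in_def incomp_def comparable_def)
  then show False
    using assms by (auto simp: max_antichain_in_def)
qed

lemma antichain_extends_to_max:
  assumes "antichain_in P S"
  obtains M where "max_antichain_in P M" and "S \<subseteq> M"
proof -
  let ?\<A> = "{A. antichain_in P A \<and> S \<subseteq> A}"
  have "\<exists>M\<in>?\<A>. \<forall>A\<in>?\<A>. M \<subseteq> A \<longrightarrow> A = M"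
  proof (rule subset_Zorn_nonempty)
    show "?\<A> \<noteq> {}"
      using assms by blast
    show "\<Union>\<C> \<in> ?\<A>" if "\<C> \<noteq> {}" and chain: "subset.chain ?\<A> \<C>" for \<C>
    proof -
      have "\<C> \<subseteq> ?\<A>" and "chain\<^sub>\<subseteq> \<C>"
        using chain by (simp_all add: subset_chain_def chain_subset_def)
      then have "pairwise incomp (\<Union>\<C>)"
        by (intro pairwise_chain_Union) (auto simp: antichain_in_iff_pairwise)
      then show ?thesis
        using \<open>\<C> \<subseteq> ?\<A>\<close> \<open>\<C> \<noteq> {}\<close> by (auto simp: antichain_in_iff_pairwise)
    qed
  qed
  then obtain M where M: "antichain_in P M" "S \<subseteq> M"
    and maximal: "\<forall>A\<in>?\<A>. M \<subseteq> A \<longrightarrow> A = M"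
    by auto
  have "max_antichain_in P M"
    unfolding max_antichain_in_def
  proof (intro conjI ballI impI notI)
    fix x assume "x \<notin> M" "antichain_in P (insert x M)"
    then show False
      using maximal M(2) by blast
  qed (rule M(1))
  then show thesis
    using M(2) by (rule that)
qed

definition covers :: "'a::order set \<Rightarrow> 'a set \<Rightarrow> bool" where
  "covers A B \<longleftrightarrow> (\<forall>a\<in>A. \<exists>b\<in>B. comparable a b)"

lemma covers_diff:
  assumes "antichain_in P A" and "covers A B"
  shows "covers (A - B) (B - A)"
  using assms antichain_comparable_eq[OF assms(1)] unfolding covers_def by fastforce

lemma max_antichain_covers_antichain:
  "max_antichain_in P A \<Longrightarrow> antichain_in P B \<Longrightarrow> covers B A"
  using max_antichain_comparable antichain_in_subset by (fastforce simp: covers_def comparable_sym)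

lemma has_induced4_obs1I:
  assumes "a \<in> P" "b \<in> P" "c \<in> P" "d \<in> P" "a < b" "c < d"
    "\<not> comparable a c" "\<not> comparable a d" "\<not> comparable b c" "\<not> comparable b d"
  shows "has_induced4 P obs1_less"
proof -
  have "{0..<4::nat} = {0, 1, 2, 3}" by auto
  then show ?thesis
    unfolding has_induced4_def
    using assms by (intro exI[of _ "\<lambda>i. [a, b, c, d] ! i"])
      (auto simp: obs1_less_def inj_on_def comparable_def dest: less_imp_le less_not_sym)
qed

lemma has_induced4_obs2I:
  assumes "a \<in> P" "b \<in> P" "c \<in> P" "d \<in> P" "a < b" "c < d" "c < b"
    "\<not> comparable a c" "\<not> comparable a d" "\<not> comparable b d"
  shows "has_induced4 P obs2_less"
proof -
  have "{0..<4::nat} = {0, 1, 2, 3}" by auto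
  then show ?thesis
    unfolding has_induced4_def
    using assms by (intro exI[of _ "\<lambda>i. [a, b, c, d] ! i"])
      (auto simp: obs2_less_def inj_on_def comparable_def dest: less_imp_le less_not_sym)
qed

lemma has_induced4_antichain_pair:
  assumes "has_induced4 P R" and "R 0 1" "R 2 3"
    and "\<not> R 0 2" "\<not> R 2 0" "\<not> R 1 3" "\<not> R 3 1" "\<not> R 0 3" "\<not> R 3 0"
  obtains a b c d where "a \<in> P" "b \<in> P" "c \<in> P" "d \<in> P" "a < b" "c < d"
    "incomp a c" "incomp b d" "incomp a d"
proof -
  obtain f where f: "inj_on f {0..<4}" "f ` {0..<4} \<subseteq> P"
    and less_iff: "\<And>i j. i < 4 \<Longrightarrow> j < 4 \<Longrightarrow> f i < f j \<longleftrightarrow> R i j"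
    using assms(1) unfolding has_induced4_def by auto
  have "f i \<noteq> f j" if "i < 4" "j < 4" "i \<noteq> j" for i j
    using inj_onD[OF f(1), of i j] that by auto
  then show thesis
    using f(2) assms(2-) less_iff[of 0 1] less_iff[of 2 3] less_iff[of 0 2] less_iff[of 2 0]
      less_iff[of 1 3] less_iff[of 3 1] less_iff[of 0 3] less_iff[of 3 0]
    by (intro that[of "f 0" "f 1" "f 2" "f 3"]) (auto simp: incomp_iff)
qed

definition neighbourhood_le :: "'a::order set \<Rightarrow> 'a \<Rightarrow> 'a \<Rightarrow> bool" where
  "neighbourhood_le P x y \<longleftrightarrow> Dn P x \<subseteq> Dn P y \<and> Up P x \<subseteq> Up P y"

definition nested_neighbourhoods :: "'a::order set \<Rightarrow> bool" where
  "nested_neighbourhoods P \<longleftrightarrow>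
     (\<forall>x\<in>P. \<forall>y\<in>P. incomp x y \<longrightarrow> neighbourhood_le P x y \<or> neighbourhood_le P y x)"

lemma neighbourhood_le_comparable:
  assumes "neighbourhood_le P u v" and "w \<in> P" "w \<noteq> u" "comparable u w"
  shows "comparable v w"
  using assms by (auto simp: neighbourhood_le_def Dn_def Up_def comparable_iff_less comparable_def)

locale covering_antichains =
  fixes P :: "'a::order set" and X Y :: "'a set"
  assumes nested: "nested_neighbourhoods P"
    and antichain_X: "antichain_in P X" and antichain_Y: "antichain_in P Y"
    and disjoint: "X \<inter> Y = {}"
    and covers_X: "covers X Y" and covers_Y: "covers Y X"
begin

lemma nestedD: "x \<in> P \<Longrightarrow> y \<in> P \<Longrightarrow> incomp x y \<Longrightarrow> neighbourhood_le P x y \<or> neighbourhood_le P y x"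
  using nested by (auto simp: nested_neighbourhoods_def)

lemma less_left_uniform:
  assumes x: "x \<in> X" and y: "y \<in> Y" and "x < y" and x': "x' \<in> X"
  shows "x' < y"
proof (rule ccontr)
  assume "\<not> x' < y"
  have x_x': "\<not> comparable x x'"
    using antichain_comparable_eq[OF antichain_X x x'] \<open>x < y\<close> \<open>\<not> x' < y\<close> by auto
  have "\<not> y < x'"
    using \<open>x < y\<close> x_x' by (auto simp: comparable_def dest: less_trans)
  then have "incomp x' y"
    using \<open>\<not> x' < y\<close> disjoint x' y by (auto simp: incomp_iff)
  moreover have "x' \<in> P" "y \<in> P" "x \<in> P"
    using x x' y antichain_X antichain_Y by (auto simp: antichain_in_def)
  ultimately consider "neighbourhood_le P y x'" | "neighbourhood_le P x' y"
    using nestedD by blast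
  then show False
  proof cases
    case 1
    then show False
      using \<open>x \<in> P\<close> \<open>x < y\<close> x_x' by (auto simp: neighbourhood_le_def Dn_def comparable_def)
  next
    case 2
    obtain y' where y': "y' \<in> Y" "comparable x' y'"
      using covers_X x' by (auto simp: covers_def)
    have "comparable y y'"
      using neighbourhood_le_comparable[OF 2, of y'] y' x' disjoint antichain_Y
      by (auto simp: antichain_in_def)
    then have "y' = y"
      using antichain_comparable_eq[OF antichain_Y y y'(1)] by simp
    then show False
      using y' \<open>incomp x' y\<close> by (simp add: incomp_def)
  qed
qed

lemma less_right_uniform:
  assumes x: "x \<in> X" and y: "y \<in> Y" and "x < y" and y': "y' \<in> Y"
  shows "x < y'"
proof (rule ccontr)
  assume "\<not> x < y'"
  have y_y': "\<not> comparable y y'"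
    using antichain_comparable_eq[OF antichain_Y y y'] \<open>x < y\<close> \<open>\<not> x < y'\<close> by auto
  have "\<not> y' < x"
    using \<open>x < y\<close> y_y' by (auto simp: comparable_def dest: less_trans)
  then have "incomp x y'"
    using \<open>\<not> x < y'\<close> disjoint x y' by (auto simp: incomp_iff)
  moreover have "x \<in> P" "y \<in> P" "y' \<in> P"
    using x y y' antichain_X antichain_Y by (auto simp: antichain_in_def)
  ultimately consider "neighbourhood_le P x y'" | "neighbourhood_le P y' x"
    using nestedD by blast
  then show False
  proof cases
    case 1
    then show False
      using \<open>y \<in> P\<close> \<open>x < y\<close> y_y' by (auto simp: neighbourhood_le_def Up_def comparable_def)
  next
    case 2
    obtain x' where x': "x' \<in> X" "comparable y' x'"
      using covers_Y y' by (auto simp: covers_def)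
    have "comparable x x'"
      using neighbourhood_le_comparable[OF 2, of x'] x' y' disjoint antichain_X
      by (auto simp: antichain_in_def)
    then have "x' = x"
      using antichain_comparable_eq[OF antichain_X x x'(1)] by simp
    then show False
      using x' \<open>incomp x y'\<close> by (simp add: incomp_def comparable_sym)
  qed
qed

lemma all_less_if_less: "x \<in> X \<Longrightarrow> y \<in> Y \<Longrightarrow> x < y \<Longrightarrow> all_less X Y"
  unfolding all_less_def by (metis less_left_uniform less_right_uniform)

end

lemma covering_antichains_swap: "covering_antichains P X Y \<Longrightarrow> covering_antichains P Y X"
  by (auto simp: covering_antichains_def)

lemma (in covering_antichains) all_less_or_all_less: "all_less X Y \<or> all_less Y X"
proof (cases "X = {}")
  case True
  then show ?thesis by (simp add: all_less_def)
next
  case False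
  then obtain x y where "x \<in> X" "y \<in> Y" "comparable x y"
    using covers_X unfolding covers_def by blast
  moreover have "x \<noteq> y"
    using calculation disjoint by auto
  ultimately show ?thesis
    using all_less_if_less covering_antichains.all_less_if_less[OF covering_antichains_swap]
    by (metis covering_antichains_axioms comparable_iff_less)
qed

lemma nested_ac_ordered:
  assumes "nested_neighbourhoods P" "antichain_in P A" "antichain_in P B" "covers A B" "covers B A"
  shows "ac_ordered A B"
proof -
  have "covering_antichains P (A - B) (B - A)"
    using assms by unfold_locales (auto intro: antichain_in_diff covers_diff)
  then show ?thesis
    unfolding ac_ordered_def by (rule covering_antichains.all_less_or_all_less)
qed

lemma max_antichains_not_ac_ordered:
  assumes "a \<in> P" "b \<in> P" "c \<in> P" "d \<in> P" "a < b" "c < d"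
    and "incomp a c" "incomp b d" "incomp a d"
  obtains A B where "max_antichain_in P A" "max_antichain_in P B" "\<not> ac_ordered A B"
proof -
  have "antichain_in P {a, c}" "antichain_in P {b, d}"
    using assms by (auto simp: antichain_in_def incomp_def comparable_sym)
  then obtain A B where A: "max_antichain_in P A" "{a, c} \<subseteq> A"
    and B: "max_antichain_in P B" "{b, d} \<subseteq> B"
    by (metis antichain_extends_to_max)
  have "a \<notin> B" "b \<notin> A" "d \<notin> A"
    using A B assms antichain_not_less[of P A] antichain_not_less[of P B]
    by (auto simp: max_antichain_in_def)
  then have "a \<in> A - B" "b \<in> B - A" "d \<in> B - A"
    using A B by auto
  then have "\<not> ac_ordered A B"
    using assms by (auto simp: ac_ordered_def all_less_def incomp_iff dest: less_not_sym)
  with A B show thesis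
    by (intro that)
qed

lemma not_has_induced4_if_max_antichains_ordered:
  assumes "\<forall>A B. max_antichain_in P A \<and> max_antichain_in P B \<longrightarrow> ac_ordered A B"
    and "R 0 1" "R 2 3" "\<not> R 0 2" "\<not> R 2 0" "\<not> R 1 3" "\<not> R 3 1" "\<not> R 0 3" "\<not> R 3 0"
  shows "\<not> has_induced4 P R"
proof
  assume "has_induced4 P R"
  then obtain a b c d where "a \<in> P" "b \<in> P" "c \<in> P" "d \<in> P" "a < b" "c < d"
    "incomp a c" "incomp b d" "incomp a d"
    using assms(2-) by (rule has_induced4_antichain_pair)
  then obtain A B where "max_antichain_in P A" "max_antichain_in P B" "\<not> ac_ordered A B"
    by (rule max_antichains_not_ac_ordered)
  with assms(1) show False
    by blast
qed

lemma obstruction_of_down_up: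
  assumes "x \<in> P" "y \<in> P" "incomp x y" "z \<in> P" "z < x" "\<not> z < y" "w \<in> P" "y < w" "\<not> x < w"
  shows "has_induced4 P obs1_less \<or> has_induced4 P obs2_less"
proof (cases "z < w")
  case True
  then have "has_induced4 P obs2_less"
    using assms by (intro has_induced4_obs2I[of y P w z x])
      (auto simp: comparable_def incomp_def le_less dest: less_trans)
  then show ?thesis ..
next
  case False
  then have "has_induced4 P obs1_less"
    using assms by (intro has_induced4_obs1I[of z P x y w])
      (auto simp: comparable_def incomp_def le_less dest: less_trans)
  then show ?thesis ..
qed

lemma obstruction_if_not_nested:
  assumes "\<not> nested_neighbourhoods P"
  shows "has_induced4 P obs1_less \<or> has_induced4 P obs2_less"
proof -
  obtain x y where xy: "x \<in> P" "y \<in> P" "incomp x y"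
    and "\<not> neighbourhood_le P x y" "\<not> neighbourhood_le P y x"
    using assms unfolding nested_neighbourhoods_def by blast
  then consider "\<not> Dn P x \<subseteq> Dn P y" "\<not> Dn P y \<subseteq> Dn P x"
    | "\<not> Up P x \<subseteq> Up P y" "\<not> Up P y \<subseteq> Up P x"
    | "\<not> Dn P x \<subseteq> Dn P y" "\<not> Up P y \<subseteq> Up P x"
    | "\<not> Dn P y \<subseteq> Dn P x" "\<not> Up P x \<subseteq> Up P y"
    unfolding neighbourhood_le_def by blast
  then show ?thesis
  proof cases
    case 1
    then obtain z w where "z \<in> P" "z < x" "\<not> z < y" "w \<in> P" "w < y" "\<not> w < x"
      by (auto simp: Dn_def)
    then have "has_induced4 P obs1_less"
      using xy by (intro has_induced4_obs1I[of z P x w y])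
        (auto simp: comparable_def incomp_def le_less dest: less_trans)
    then show ?thesis ..
  next
    case 2
    then obtain z w where "z \<in> P" "x < z" "\<not> y < z" "w \<in> P" "y < w" "\<not> x < w"
      by (auto simp: Up_def)
    then have "has_induced4 P obs1_less"
      using xy by (intro has_induced4_obs1I[of x P z y w])
        (auto simp: comparable_def incomp_def le_less dest: less_trans)
    then show ?thesis ..
  next
    case 3
    then obtain z w where "z \<in> P" "z < x" "\<not> z < y" "w \<in> P" "y < w" "\<not> x < w"
      by (auto simp: Dn_def Up_def)
    with xy show ?thesis
      by (rule obstruction_of_down_up)
  next
    case 4
    then obtain z w where "z \<in> P" "z < y" "\<not> z < x" "w \<in> P" "x < w" "\<not> y < w"
      by (auto simp: Dn_def Up_def)
    moreover have "incomp y x"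
      using xy(3) by (simp add: incomp_sym)
    ultimately show ?thesis
      using xy(1,2) by (intro obstruction_of_down_up[of y P x z w])
  qed
qed

theorem lemma4p1:
  fixes P :: "'a::order set"
  defines "c1 \<equiv> (\<forall>x\<in>P. \<forall>y\<in>P. incomp x y \<longrightarrow>
              (Dn P x \<subseteq> Dn P y \<and> Up P x \<subseteq> Up P y) \<or> (Dn P y \<subseteq> Dn P x \<and> Up P y \<subseteq> Up P x))"
      and "c2 \<equiv> (\<forall>A B. antichain_in P A \<and> antichain_in P B \<and>
              (\<forall>a\<in>A. \<exists>b\<in>B. comparable a b) \<and> (\<forall>b\<in>B. \<exists>a\<in>A. comparable a b)
              \<longrightarrow> ac_ordered A B)"
      and "c3 \<equiv> (\<forall>A B. max_antichain_in P A \<and> max_antichain_in P B \<longrightarrow> ac_ordered A B)"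
      and "c4 \<equiv> (\<forall>A B. max_antichain_in P A \<and> antichain_in P B \<and>
              (\<forall>a\<in>A. \<exists>b\<in>B. comparable a b) \<longrightarrow> ac_ordered A B)"
      and "c5 \<equiv> (\<not> has_induced4 P obs1_less \<and> \<not> has_induced4 P obs2_less)"
  shows "(c1 \<longleftrightarrow> c2) \<and> (c1 \<longleftrightarrow> c3) \<and> (c1 \<longleftrightarrow> c4) \<and> (c1 \<longleftrightarrow> c5)"
proof -
  have c1_iff: "c1 \<longleftrightarrow> nested_neighbourhoods P"
    unfolding c1_def nested_neighbourhoods_def neighbourhood_le_def ..
  have c2_iff: "c2 \<longleftrightarrow> (\<forall>A B. antichain_in P A \<and> antichain_in P B \<and> covers A B \<and> covers B A
      \<longrightarrow> ac_ordered A B)"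
    unfolding c2_def covers_def by (simp add: comparable_sym)
  have c4_iff: "c4 \<longleftrightarrow> (\<forall>A B. max_antichain_in P A \<and> antichain_in P B \<and> covers A B
      \<longrightarrow> ac_ordered A B)"
    unfolding c4_def covers_def ..
  have "c1 \<Longrightarrow> c2"
    unfolding c1_iff c2_iff by (blast intro: nested_ac_ordered)
  moreover have "c2 \<Longrightarrow> c4"
    unfolding c2_iff c4_iff by (metis max_antichain_in_antichain max_antichain_covers_antichain)
  moreover have "c4 \<Longrightarrow> c3"
    unfolding c3_def c4_iff by (metis max_antichain_in_antichain max_antichain_covers_antichain)
  moreover have "c3 \<Longrightarrow> c5"
    unfolding c3_def c5_def
    by (intro conjI not_has_induced4_if_max_antichains_ordered) (simp_all add: obs1_less_def obs2_less_def)
  moreover have "c5 \<Longrightarrow> c1"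
    unfolding c1_iff c5_def using obstruction_if_not_nested by blast
  ultimately show ?thesis
    by blast
qed

end
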